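(* Let $\mathbf{P}$ be a finite poset, $M,N$ $\mathbf{P}$-modules, and $(\mathbf{Q},f\dashv g,h\dashv i,\Gamma)$ a Galois coupling of $(M,N)$. Then $(\mathrm{Int}\,\overline{\mathbf{Q}},\ \mathrm{Int}\,\overline{f}\dashv\mathrm{Int}\,\overline{g},\ \mathrm{Int}\,\overline{h}\dashv\mathrm{Int}\,\overline{i},\ K(\Gamma))$ is a Galois coupling of $(K(M),K(N))$ (as $\mathrm{Int}\,\overline{\mathbf{P}}$-modules).
   Context: Fix a field $k$; $\mathrm{vect}$ is the category of finite-dimensional $k$-vector spaces. Finite posets are categories with a unique morphism $x\to y$ iff $x\le y$; for a finite poset $\mathbf{S}$, an $\mathbf{S}$-module is a functor $\mathbf{S}\to\mathrm{vect}$; for monotone $g$, $g^*$ is precomposition with $g$. A Galois insertion $f:\mathbf{Q}\rightleftarrows\mathbf{S}:g$ is a pair of monotone maps $f:\mathbf{Q}\to\mathbf{S}$, $g:\mathbf{S}\to\mathbf{Q}$ with $f(u)\le x\iff u\le g(x)$ and $f\circ g=\mathrm{id}_{\mathbf{S}}$. A Galois coupling of a pair $(A,B)$ of $\mathbf{S}$-modules is $(\mathbf{Q},f\dashv g,h\dashv i,\Gamma)$ with $\mathbf{Q}$ a finite poset, $f:\mathbf{Q}\rightleftarrows\mathbf{S}:g$ and $h:\mathbf{Q}\rightleftarrows\mathbf{S}:i$ Galois insertions, and a $\mathbf{Q}$-module $\Gamma$ with $g^*\Gamma\cong A$, $i^*\Gamma\cong B$. For a finite poset $\mathbf{S}$,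 $\overline{\mathbf{S}}=\mathbf{S}\sqcup\{\top\}$ with $s<\top$ for all $s$; for monotone $f$, $\overline{f}$ extends $f$ by $\top\mapsto\top$. $\mathrm{Int}\,\mathbf{S}=\{(x,y)\in\mathbf{S}\times\mathbf{S}\mid x\le y\}$ with product order; $(\mathrm{Int}\,f)(x,y)=(f(x),f(y))$. For an $\mathbf{S}$-module $M$, $\overline{M}$ extends $M$ to $\overline{\mathbf{S}}$ by $\overline{M}(\top)=0$, and $K(M)$ is the $\mathrm{Int}\,\overline{\mathbf{S}}$-module $K(M)((x,y))=\ker\overline{M}(x\le y)$ with structure map for $(x_1,y_1)\le(x_2,y_2)$ the restriction of $\overline{M}(x_1\le x_2)$ (here $K$ is applied both to $\mathbf{P}$-modules and to $\mathbf{Q}$-modules). *)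

theory Defs
  imports Main "HOL.Vector_Spaces"
begin

definition finite_poset :: "'a set \<Rightarrow> ('a \<Rightarrow> 'a \<Rightarrow> bool) \<Rightarrow> bool" where
  "finite_poset S le \<longleftrightarrow> finite S
     \<and> (\<forall>x\<in>S. le x x)
     \<and> (\<forall>x\<in>S. \<forall>y\<in>S. le x y \<and> le y x \<longrightarrow> x = y)
     \<and> (\<forall>x\<in>S. \<forall>y\<in>S. \<forall>z\<in>S. le x y \<and> le y z \<longrightarrow> le x z)"

definition monotone_between ::
  "'a set \<Rightarrow> ('a \<Rightarrow> 'a \<Rightarrow> bool) \<Rightarrow> 'b set \<Rightarrow> ('b \<Rightarrow> 'b \<Rightarrow> bool) \<Rightarrow> ('a \<Rightarrow> 'b) \<Rightarrow> bool" where
  "monotone_between A leA B leB f \<longleftrightarrow>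
     (\<forall>x\<in>A. f x \<in> B) \<and> (\<forall>x\<in>A. \<forall>y\<in>A. leA x y \<longrightarrow> leB (f x) (f y))"

definition galois_insertion ::
  "'b set \<Rightarrow> ('b \<Rightarrow> 'b \<Rightarrow> bool) \<Rightarrow> 'a set \<Rightarrow> ('a \<Rightarrow> 'a \<Rightarrow> bool)
   \<Rightarrow> ('b \<Rightarrow> 'a) \<Rightarrow> ('a \<Rightarrow> 'b) \<Rightarrow> bool" where
  "galois_insertion Q leQ S leS f g \<longleftrightarrow>
     monotone_between Q leQ S leS f \<and> monotone_between S leS Q leQ g
     \<and> (\<forall>u\<in>Q. \<forall>x\<in>S. leS (f u) x \<longleftrightarrow> leQ u (g x))
     \<and> (\<forall>x\<in>S. f (g x) = x)"

text \<open>\<open>None\<close> plays the role of the new top element.\<close>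
definition bar_carrier :: "'a set \<Rightarrow> 'a option set" where
  "bar_carrier S = insert None (Some ` S)"

definition bar_le :: "('a \<Rightarrow> 'a \<Rightarrow> bool) \<Rightarrow> 'a option \<Rightarrow> 'a option \<Rightarrow> bool" where
  "bar_le le x y = (case y of None \<Rightarrow> True
                     | Some b \<Rightarrow> (case x of None \<Rightarrow> False | Some a \<Rightarrow> le a b))"

definition bar_map :: "('b \<Rightarrow> 'a) \<Rightarrow> 'b option \<Rightarrow> 'a option" where
  "bar_map f = map_option f"

definition Int_carrier :: "'a set \<Rightarrow> ('a \<Rightarrow> 'a \<Rightarrow> bool) \<Rightarrow> ('a \<times> 'a) set" where
  "Int_carrier S le = {(x, y). x \<in> S \<and> y \<in> S \<and> le x y}"

definition Int_le :: "('a \<Rightarrow> 'a \<Rightarrow> bool) \<Rightarrow> 'a \<times> 'a \<Rightarrow> 'a \<times> 'a \<Rightarrow> bool" where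
  "Int_le le p q \<longleftrightarrow> le (fst p) (fst q) \<and> le (snd p) (snd q)"

definition Int_map :: "('b \<Rightarrow> 'a) \<Rightarrow> 'b \<times> 'b \<Rightarrow> 'a \<times> 'a" where
  "Int_map f p = (f (fst p), f (snd p))"

text \<open>An S-module (functor S \<rightarrow> vect over the field 'k with scalar action scale) is
  represented by a family of finite-dimensional subspaces V x of an ambient k-vector space
  'v together with linear structure maps \<phi> x y for x \<le> y, satisfying the functor laws
  on the relevant subspaces.\<close>
type_synonym ('a, 'v) pmod = "('a \<Rightarrow> 'v set) \<times> ('a \<Rightarrow> 'a \<Rightarrow> 'v \<Rightarrow> 'v)"

definition fin_dim_subspace :: "('k::field \<Rightarrow> 'v::ab_group_add \<Rightarrow> 'v) \<Rightarrow> 'v set \<Rightarrow> bool" where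
  "fin_dim_subspace scale V \<longleftrightarrow> module.subspace scale V
     \<and> (\<exists>B. finite B \<and> B \<subseteq> V \<and> module.span scale B = V)"

definition is_pmod ::
  "('k::field \<Rightarrow> 'v::ab_group_add \<Rightarrow> 'v) \<Rightarrow> 'a set \<Rightarrow> ('a \<Rightarrow> 'a \<Rightarrow> bool) \<Rightarrow> ('a, 'v) pmod \<Rightarrow> bool" where
  "is_pmod scale S le M \<longleftrightarrow> vector_space scale
     \<and> (\<forall>x\<in>S. fin_dim_subspace scale (fst M x))
     \<and> (\<forall>x\<in>S. \<forall>y\<in>S. le x y \<longrightarrow>
          Vector_Spaces.linear scale scale (snd M x y) \<and> snd M x y ` fst M x \<subseteq> fst M y)
     \<and> (\<forall>x\<in>S. \<forall>v\<in>fst M x. snd M x x v = v)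
     \<and> (\<forall>x\<in>S. \<forall>y\<in>S. \<forall>z\<in>S. le x y \<and> le y z \<longrightarrow>
          (\<forall>v\<in>fst M x. snd M x z v = snd M y z (snd M x y v)))"

definition pmod_iso ::
  "('k::field \<Rightarrow> 'v::ab_group_add \<Rightarrow> 'v) \<Rightarrow> ('k \<Rightarrow> 'w::ab_group_add \<Rightarrow> 'w)
   \<Rightarrow> 'a set \<Rightarrow> ('a \<Rightarrow> 'a \<Rightarrow> bool) \<Rightarrow> ('a, 'v) pmod \<Rightarrow> ('a, 'w) pmod \<Rightarrow> bool" where
  "pmod_iso s1 s2 S le M1 M2 \<longleftrightarrow> (\<exists>\<alpha>.
     (\<forall>x\<in>S. Vector_Spaces.linear s1 s2 (\<alpha> x) \<and> bij_betw (\<alpha> x) (fst M1 x) (fst M2 x))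
     \<and> (\<forall>x\<in>S. \<forall>y\<in>S. le x y \<longrightarrow>
          (\<forall>v\<in>fst M1 x. \<alpha> y (snd M1 x y v) = snd M2 x y (\<alpha> x v))))"

definition pullback :: "('a \<Rightarrow> 'b) \<Rightarrow> ('b, 'v) pmod \<Rightarrow> ('a, 'v) pmod" where
  "pullback g M = (\<lambda>x. fst M (g x), \<lambda>x y. snd M (g x) (g y))"

definition bar_mod :: "('a, 'v::zero) pmod \<Rightarrow> ('a option, 'v) pmod" where
  "bar_mod M =
    (\<lambda>x. case x of None \<Rightarrow> {0} | Some a \<Rightarrow> fst M a,
     \<lambda>x y. case (x, y) of (Some a, Some b) \<Rightarrow> snd M a b | _ \<Rightarrow> (\<lambda>_. 0))"

definition K_mod :: "('a, 'v::zero) pmod \<Rightarrow> ('a option \<times> 'a option, 'v) pmod" where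
  "K_mod M =
    (\<lambda>p. {v \<in> fst (bar_mod M) (fst p). snd (bar_mod M) (fst p) (snd p) v = 0},
     \<lambda>p q. snd (bar_mod M) (fst p) (fst q))"

definition galois_coupling ::
  "('k::field \<Rightarrow> 'v::ab_group_add \<Rightarrow> 'v) \<Rightarrow> ('k \<Rightarrow> 'w::ab_group_add \<Rightarrow> 'w)
   \<Rightarrow> 'a set \<Rightarrow> ('a \<Rightarrow> 'a \<Rightarrow> bool)
   \<Rightarrow> 'b set \<Rightarrow> ('b \<Rightarrow> 'b \<Rightarrow> bool)
   \<Rightarrow> ('b \<Rightarrow> 'a) \<Rightarrow> ('a \<Rightarrow> 'b) \<Rightarrow> ('b \<Rightarrow> 'a) \<Rightarrow> ('a \<Rightarrow> 'b)
   \<Rightarrow> ('b, 'w) pmod \<Rightarrow> ('a, 'v) pmod \<Rightarrow> ('a, 'v) pmod \<Rightarrow> bool" where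
  "galois_coupling sV sW S leS Q leQ f g h i \<Gamma> A B \<longleftrightarrow>
     finite_poset S leS \<and> is_pmod sV S leS A \<and> is_pmod sV S leS B
     \<and> finite_poset Q leQ
     \<and> galois_insertion Q leQ S leS f g \<and> galois_insertion Q leQ S leS h i
     \<and> is_pmod sW Q leQ \<Gamma>
     \<and> pmod_iso sW sV S leS (pullback g \<Gamma>) A
     \<and> pmod_iso sW sV S leS (pullback i \<Gamma>) B"

end

theory Submission
  imports Defs
begin

text \<open>The functor \<open>K\<close> is the kernel construction \<open>(x, y) \<mapsto> ker M(x \<le> y)\<close> on \<open>Int S\<close> applied to
  the extension by zero \<open>\<overline>M\<close>, and both steps commute on the nose with pullback along monotone
  maps. Both steps also preserve isomorphisms; for kernels this is because, by naturality, an
  isomorphism \<open>\<alpha>\<close> satisfies \<open>B(x \<le> y) (\<alpha>\<^sub>x v) = \<alpha>\<^sub>y (A(x \<le> y) v)\<close> and \<open>\<alpha>\<^sub>y\<close> is injective, so \<open>\<alpha>\<^sub>x\<close>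
  maps \<open>ker A(x \<le> y)\<close> onto \<open>ker B(x \<le> y)\<close>. Hence \<open>(Int \<overline>g)\<^sup>* K(\<Gamma>) = K(g\<^sup>* \<Gamma>) \<cong> K(M)\<close>, and likewise
  for \<open>i\<close> and \<open>N\<close>. Adjoining a top element and passing to intervals act componentwise on orders and
  maps, so they preserve finite posets and Galois insertions.\<close>

lemma bar_le_simps [simp]:
  "bar_le le x None"
  "\<not> bar_le le None (Some b)"
  "bar_le le (Some a) (Some b) \<longleftrightarrow> le a b"
  by (simp_all add: bar_le_def)

lemma finite_poset_bar:
  assumes "finite_poset S le"
  shows "finite_poset (bar_carrier S) (bar_le le)"
proof -
  have S: "finite S" "\<forall>x\<in>S. le x x" "\<forall>x\<in>S. \<forall>y\<in>S. le x y \<and> le y x \<longrightarrow> x = y"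
    "\<forall>x\<in>S. \<forall>y\<in>S. \<forall>z\<in>S. le x y \<and> le y z \<longrightarrow> le x z"
    using assms unfolding finite_poset_def by blast+
  show ?thesis
    unfolding finite_poset_def bar_carrier_def by (simp add: S(1)) (use S in blast)
qed

lemma finite_poset_Int:
  assumes "finite_poset S le"
  shows "finite_poset (Int_carrier S le) (Int_le le)"
proof -
  have "Int_carrier S le \<subseteq> S \<times> S" by (auto simp: Int_carrier_def)
  with assms show ?thesis
    unfolding finite_poset_def Int_carrier_def Int_le_def
    by (simp add: prod_eq_iff finite_subset) blast
qed

lemma galois_insertion_bar:
  "galois_insertion Q leQ S leS f g \<Longrightarrow>
   galois_insertion (bar_carrier Q) (bar_le leQ) (bar_carrier S) (bar_le leS) (bar_map f) (bar_map g)"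
  unfolding galois_insertion_def monotone_between_def bar_carrier_def bar_le_def bar_map_def
  by (auto split: option.splits)

lemma galois_insertion_Int:
  "galois_insertion Q leQ S leS f g \<Longrightarrow>
   galois_insertion (Int_carrier Q leQ) (Int_le leQ) (Int_carrier S leS) (Int_le leS)
     (Int_map f) (Int_map g)"
  unfolding galois_insertion_def monotone_between_def Int_carrier_def Int_le_def Int_map_def
  by auto

lemma linear_map_0: "Vector_Spaces.linear s1 s2 f \<Longrightarrow> f 0 = 0"
  by (metis module_hom_iff_linear module_hom.zero)

lemma linear_const_0:
  "vector_space s1 \<Longrightarrow> vector_space s2 \<Longrightarrow> Vector_Spaces.linear s1 s2 (\<lambda>_. 0)"
  by (simp add: vector_space_pair.intro vector_space_pair.linear_zero)

lemma fin_dim_subspace_subspace: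
  assumes vs: "vector_space s" and "fin_dim_subspace s V"
    and W: "module.subspace s W" and "W \<subseteq> V"
  shows "fin_dim_subspace s W"
proof -
  obtain B where B: "finite B" "module.span s B = V"
    using assms(2) unfolding fin_dim_subspace_def by blast
  obtain C where C: "C \<subseteq> W" "\<not> module.dependent s C" "W \<subseteq> module.span s C"
    by (rule vector_space.basis_exists[OF vs])
  have "finite C"
    using vector_space.independent_span_bound[OF vs B(1) C(2)] C(1) B(2) assms(4) by blast
  moreover have "module.span s C \<subseteq> W"
    using vs C(1) W by (simp add: module.span_minimal module_iff_vector_space)
  ultimately show ?thesis
    unfolding fin_dim_subspace_def using W C by blast
qed

lemma fin_dim_subspace_zero: "vector_space s \<Longrightarrow> fin_dim_subspace s {0}"
  unfolding fin_dim_subspace_def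
  by (metis empty_subsetI finite.emptyI module.span_empty module.subspace_single_0
      module_iff_vector_space)

lemma fin_dim_subspace_kernel:
  assumes V: "fin_dim_subspace s V" and f: "Vector_Spaces.linear s s' f"
  shows "fin_dim_subspace s {v \<in> V. f v = 0}"
proof (rule fin_dim_subspace_subspace[OF _ V])
  have vs: "vector_space s" and vs': "vector_space s'" using f by (simp_all add: linear_iff)
  show "vector_space s" by (fact vs)
  have "module.subspace s {v. f v = 0}"
    using vector_space_pair.linear_subspace_kernel[OF vector_space_pair.intro[OF vs vs'] f] .
  moreover have "module.subspace s V" using V by (simp add: fin_dim_subspace_def)
  ultimately have "module.subspace s (V \<inter> {v. f v = 0})"
    using vs module.subspace_inter module_iff_vector_space by blast
  moreover have "V \<inter> {v. f v = 0} = {v \<in> V. f v = 0}" by blast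
  ultimately show "module.subspace s {v \<in> V. f v = 0}" by simp
qed blast

lemma is_pmodD:
  assumes "is_pmod s S le M"
  shows pmod_vector_space: "vector_space s"
    and pmod_fin_dim: "x \<in> S \<Longrightarrow> fin_dim_subspace s (fst M x)"
    and pmod_linear: "x \<in> S \<Longrightarrow> y \<in> S \<Longrightarrow> le x y \<Longrightarrow> Vector_Spaces.linear s s (snd M x y)"
    and pmod_maps_into:
      "x \<in> S \<Longrightarrow> y \<in> S \<Longrightarrow> le x y \<Longrightarrow> v \<in> fst M x \<Longrightarrow> snd M x y v \<in> fst M y"
    and pmod_id: "x \<in> S \<Longrightarrow> v \<in> fst M x \<Longrightarrow> snd M x x v = v"
    and pmod_comp: "x \<in> S \<Longrightarrow> y \<in> S \<Longrightarrow> z \<in> S \<Longrightarrow> le x y \<Longrightarrow> le y z \<Longrightarrow> v \<in> fst M x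
      \<Longrightarrow> snd M x z v = snd M y z (snd M x y v)"
  using assms unfolding is_pmod_def by blast+

lemma pmod_zero_mem: "is_pmod s S le M \<Longrightarrow> x \<in> S \<Longrightarrow> 0 \<in> fst M x"
  using pmod_fin_dim pmod_vector_space unfolding fin_dim_subspace_def
  by (meson module.subspace_0 module_iff_vector_space)

lemma is_pmod_pullback:
  "is_pmod s Q leQ G \<Longrightarrow> monotone_between S leS Q leQ g \<Longrightarrow> is_pmod s S leS (pullback g G)"
  unfolding is_pmod_def monotone_between_def pullback_def by auto

lemma is_pmod_bar_mod:
  assumes "is_pmod s S le M"
  shows "is_pmod s (bar_carrier S) (bar_le le) (bar_mod M)"
  using assms linear_const_0[of s s] fin_dim_subspace_zero[of s]
  unfolding is_pmod_def bar_carrier_def bar_le_def bar_mod_def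
  by (auto split: option.splits)

lemma pmod_iso_bar_mod:
  fixes s1 :: "'k::field \<Rightarrow> 'v::ab_group_add \<Rightarrow> 'v" and s2 :: "'k \<Rightarrow> 'w::ab_group_add \<Rightarrow> 'w"
  assumes "vector_space s1" and "vector_space s2" and "pmod_iso s1 s2 S le A B"
  shows "pmod_iso s1 s2 (bar_carrier S) (bar_le le) (bar_mod A) (bar_mod B)"
proof -
  obtain \<alpha> where
    \<alpha>: "\<forall>x\<in>S. Vector_Spaces.linear s1 s2 (\<alpha> x) \<and> bij_betw (\<alpha> x) (fst A x) (fst B x)"
    and nat: "\<forall>x\<in>S. \<forall>y\<in>S. le x y \<longrightarrow>
      (\<forall>v\<in>fst A x. \<alpha> y (snd A x y v) = snd B x y (\<alpha> x v))"
    using assms(3) unfolding pmod_iso_def by blast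
  have "bij_betw (\<lambda>_. 0) {0::'v} {0::'w}" by (simp add: bij_betw_def)
  then show ?thesis
    unfolding pmod_iso_def
    using \<alpha> nat linear_const_0[OF assms(1,2)]
    by (intro exI[of _ "case_option (\<lambda>_. 0) \<alpha>"])
      (auto simp: bar_carrier_def bar_le_def bar_mod_def split: option.splits)
qed

definition kernel_mod :: "('a, 'v::zero) pmod \<Rightarrow> ('a \<times> 'a, 'v) pmod" where
  "kernel_mod M =
    (\<lambda>p. {v \<in> fst M (fst p). snd M (fst p) (snd p) v = 0}, \<lambda>p q. snd M (fst p) (fst q))"

lemma K_mod_eq_kernel_mod: "K_mod M = kernel_mod (bar_mod M)"
  by (simp add: K_mod_def kernel_mod_def)

lemma pullback_bar_mod: "pullback (bar_map g) (bar_mod G) = bar_mod (pullback g G)"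
  unfolding pullback_def bar_mod_def bar_map_def
  by (auto intro!: ext split: option.splits)

lemma pullback_kernel_mod: "pullback (Int_map g) (kernel_mod G) = kernel_mod (pullback g G)"
  unfolding pullback_def kernel_mod_def Int_map_def by simp

lemma pmod_map_kernel:
  assumes M: "is_pmod s S le M"
    and "x1 \<in> S" "y1 \<in> S" "x2 \<in> S" "y2 \<in> S" "le x1 y1" "le x2 y2" "le x1 x2" "le y1 y2"
    and v: "v \<in> fst M x1" "snd M x1 y1 v = 0"
  shows "snd M x2 y2 (snd M x1 x2 v) = 0"
proof -
  have "snd M x2 y2 (snd M x1 x2 v) = snd M x1 y2 v" using pmod_comp[OF M] assms by metis
  also have "\<dots> = snd M y1 y2 (snd M x1 y1 v)" using pmod_comp[OF M] assms by blast
  also have "\<dots> = 0" using v(2) linear_map_0 pmod_linear[OF M] assms by metis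
  finally show ?thesis .
qed

lemma is_pmod_kernel_mod:
  assumes M: "is_pmod s S le M"
  shows "is_pmod s (Int_carrier S le) (Int_le le) (kernel_mod M)"
  unfolding is_pmod_def
proof (intro conjI ballI impI allI)
  show "vector_space s" using pmod_vector_space[OF M] .
  fix p assume "p \<in> Int_carrier S le"
  then obtain x y where p: "p = (x, y)" "x \<in> S" "y \<in> S" "le x y"
    unfolding Int_carrier_def by auto
  show "fin_dim_subspace s (fst (kernel_mod M) p)"
    using fin_dim_subspace_kernel[OF pmod_fin_dim[OF M] pmod_linear[OF M]] p
    by (simp add: kernel_mod_def)
  show "snd (kernel_mod M) p p v = v" if "v \<in> fst (kernel_mod M) p" for v
    using that pmod_id[OF M] p by (simp add: kernel_mod_def)
next
  fix p q assume "p \<in> Int_carrier S le" "q \<in> Int_carrier S le" "Int_le le p q"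
  then obtain x1 y1 x2 y2 where pq: "p = (x1, y1)" "q = (x2, y2)"
    and S: "x1 \<in> S" "y1 \<in> S" "x2 \<in> S" "y2 \<in> S"
    and le: "le x1 y1" "le x2 y2" "le x1 x2" "le y1 y2"
    unfolding Int_carrier_def Int_le_def by auto
  show "Vector_Spaces.linear s s (snd (kernel_mod M) p q)"
    using pmod_linear[OF M] S le pq by (simp add: kernel_mod_def)
  show "snd (kernel_mod M) p q ` fst (kernel_mod M) p \<subseteq> fst (kernel_mod M) q"
    using pmod_maps_into[OF M] pmod_map_kernel[OF M S le] S le pq
    by (auto simp: kernel_mod_def)
next
  fix p q r v
  assume "p \<in> Int_carrier S le" "q \<in> Int_carrier S le" "r \<in> Int_carrier S le"
    and "Int_le le p q \<and> Int_le le q r" and "v \<in> fst (kernel_mod M) p"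
  then show "snd (kernel_mod M) p r v = snd (kernel_mod M) q r (snd (kernel_mod M) p q v)"
    using pmod_comp[OF M] unfolding kernel_mod_def Int_carrier_def Int_le_def by auto
qed

lemma pmod_iso_kernel_mod:
  fixes S :: "'a set"
  assumes A: "is_pmod s1 S le A" and "pmod_iso s1 s2 S le A B"
  shows "pmod_iso s1 s2 (Int_carrier S le) (Int_le le) (kernel_mod A) (kernel_mod B)"
proof -
  obtain \<alpha> where
    \<alpha>: "\<forall>x\<in>S. Vector_Spaces.linear s1 s2 (\<alpha> x) \<and> bij_betw (\<alpha> x) (fst A x) (fst B x)"
    and nat: "\<forall>x\<in>S. \<forall>y\<in>S. le x y \<longrightarrow>
      (\<forall>v\<in>fst A x. \<alpha> y (snd A x y v) = snd B x y (\<alpha> x v))"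
    using assms(2) unfolding pmod_iso_def by blast
  have kernel_bij:
    "bij_betw (\<alpha> x) {w \<in> fst A x. snd A x y w = 0} {v \<in> fst B x. snd B x y v = 0}"
    if xy: "x \<in> S" "y \<in> S" "le x y" for x y
  proof (rule bij_betw_Collect)
    show "bij_betw (\<alpha> x) (fst A x) (fst B x)" using \<alpha> xy by blast
    fix w assume w: "w \<in> fst A x"
    have "snd A x y w \<in> fst A y" using pmod_maps_into[OF A] xy w .
    moreover have "0 \<in> fst A y" using pmod_zero_mem[OF A xy(2)] .
    moreover have "\<alpha> y 0 = 0" using \<alpha> xy linear_map_0 by blast
    moreover have "inj_on (\<alpha> y) (fst A y)" using \<alpha> xy by (simp add: bij_betw_def)
    ultimately have "\<alpha> y (snd A x y w) = 0 \<longleftrightarrow> snd A x y w = 0"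
      by (metis inj_onD)
    then show "snd B x y (\<alpha> x w) = 0 \<longleftrightarrow> snd A x y w = 0"
      using nat xy w by simp
  qed
  define \<beta> where "\<beta> p = \<alpha> (fst p)" for p :: "'a \<times> 'a"
  have "\<forall>p\<in>Int_carrier S le. Vector_Spaces.linear s1 s2 (\<beta> p)
      \<and> bij_betw (\<beta> p) (fst (kernel_mod A) p) (fst (kernel_mod B) p)"
    using \<alpha> kernel_bij unfolding \<beta>_def Int_carrier_def kernel_mod_def by auto
  moreover have "\<forall>p\<in>Int_carrier S le. \<forall>q\<in>Int_carrier S le. Int_le le p q \<longrightarrow>
      (\<forall>v\<in>fst (kernel_mod A) p.
        \<beta> q (snd (kernel_mod A) p q v) = snd (kernel_mod B) p q (\<beta> p v))"
    using nat unfolding \<beta>_def kernel_mod_def Int_carrier_def Int_le_def by auto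
  ultimately show ?thesis unfolding pmod_iso_def by blast
qed

lemma is_pmod_K_mod:
  "is_pmod s S le M \<Longrightarrow>
   is_pmod s (Int_carrier (bar_carrier S) (bar_le le)) (Int_le (bar_le le)) (K_mod M)"
  unfolding K_mod_eq_kernel_mod by (intro is_pmod_kernel_mod is_pmod_bar_mod)

lemma pmod_iso_K_mod_pullback:
  assumes G: "is_pmod s1 Q leQ G" and g: "monotone_between S leS Q leQ g"
    and "vector_space s2" and "pmod_iso s1 s2 S leS (pullback g G) L"
  shows "pmod_iso s1 s2 (Int_carrier (bar_carrier S) (bar_le leS)) (Int_le (bar_le leS))
           (pullback (Int_map (bar_map g)) (K_mod G)) (K_mod L)"
  unfolding K_mod_eq_kernel_mod pullback_kernel_mod pullback_bar_mod
  by (rule pmod_iso_kernel_mod[OF is_pmod_bar_mod[OF is_pmod_pullback[OF G g]]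
        pmod_iso_bar_mod[OF pmod_vector_space[OF G] assms(3,4)]])

theorem lemma6p11:
  fixes sV :: "'k::field \<Rightarrow> 'v::ab_group_add \<Rightarrow> 'v"
    and sW :: "'k \<Rightarrow> 'w::ab_group_add \<Rightarrow> 'w"
    and P :: "'a set" and leP :: "'a \<Rightarrow> 'a \<Rightarrow> bool"
    and Q :: "'b set" and leQ :: "'b \<Rightarrow> 'b \<Rightarrow> bool"
    and f h :: "'b \<Rightarrow> 'a" and g i :: "'a \<Rightarrow> 'b"
    and \<Gamma> :: "('b, 'w) pmod" and M N :: "('a, 'v) pmod"
  assumes "finite_poset P leP"
    and "is_pmod sV P leP M" and "is_pmod sV P leP N"
    and "galois_coupling sV sW P leP Q leQ f g h i \<Gamma> M N"
  shows "galois_coupling sV sW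
           (Int_carrier (bar_carrier P) (bar_le leP)) (Int_le (bar_le leP))
           (Int_carrier (bar_carrier Q) (bar_le leQ)) (Int_le (bar_le leQ))
           (Int_map (bar_map f)) (Int_map (bar_map g))
           (Int_map (bar_map h)) (Int_map (bar_map i))
           (K_mod \<Gamma>) (K_mod M) (K_mod N)"
proof -
  have Q: "finite_poset Q leQ" and fg: "galois_insertion Q leQ P leP f g"
    and hi: "galois_insertion Q leQ P leP h i" and \<Gamma>: "is_pmod sW Q leQ \<Gamma>"
    and M: "pmod_iso sW sV P leP (pullback g \<Gamma>) M"
    and N: "pmod_iso sW sV P leP (pullback i \<Gamma>) N"
    using assms(4) unfolding galois_coupling_def by auto
  have g: "monotone_between P leP Q leQ g" and i: "monotone_between P leP Q leQ i"
    using fg hi unfolding galois_insertion_def by blast+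
  have vV: "vector_space sV" using pmod_vector_space[OF assms(2)] .
  show ?thesis
    unfolding galois_coupling_def
    by (intro conjI finite_poset_Int finite_poset_bar galois_insertion_Int galois_insertion_bar
        is_pmod_K_mod assms(1-3) Q fg hi \<Gamma>
        pmod_iso_K_mod_pullback[OF \<Gamma> g vV M] pmod_iso_K_mod_pullback[OF \<Gamma> i vV N])
qed

end
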